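(* Let $k$ be a positive integer, $a\ge k+2$ an integer and $G=K_a\,\square\,K_a$. Then $\gamma_{P,k}(G-e)=a-k-1$ for every edge $e$ of $G$.
   Context: $K_a$ is the complete graph on $a$ vertices, $\square$ denotes the Cartesian product of graphs, and $G-e$ is obtained by deleting the edge $e$. $N_G[v]$ is the closed neighbourhood of $v$, and $N_G[S]$ the union of closed neighbourhoods of vertices of $S$. For $S\subseteq V(G)$, define $\mathcal{P}^{0}_{G,k}(S)=N_G[S]$ and $\mathcal{P}^{i+1}_{G,k}(S)=\bigcup\{N_G[v] : v\in \mathcal{P}^{i}_{G,k}(S),\ |N_G[v]\setminus \mathcal{P}^{i}_{G,k}(S)|\le k\}$; these increase and stabilize to $\mathcal{P}^{\infty}_{G,k}(S)$. $S$ is a $k$-power dominating set if $\mathcal{P}^{\infty}_{G,k}(S)=V(G)$; $\gamma_{P,k}(G)$ is the minimum size of such a set. *)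

theory Defs
  imports Main
begin

text \<open>A finite simple graph is represented by a vertex set V and an edge set E,
each edge being a 2-element subset of V.\<close>

definition cnbhd :: "'a set \<Rightarrow> 'a set set \<Rightarrow> 'a \<Rightarrow> 'a set" where
  "cnbhd V E v = {v} \<union> {u\<in>V. {u, v} \<in> E}"

definition cnbhd_set :: "'a set \<Rightarrow> 'a set set \<Rightarrow> 'a set \<Rightarrow> 'a set" where
  "cnbhd_set V E S = (\<Union>v\<in>S. cnbhd V E v)"

fun pd_step :: "'a set \<Rightarrow> 'a set set \<Rightarrow> nat \<Rightarrow> 'a set \<Rightarrow> nat \<Rightarrow> 'a set" where
  "pd_step V E k S 0 = cnbhd_set V E S"
| "pd_step V E k S (Suc i) =
     (\<Union>{cnbhd V E v | v. v \<in> pd_step V E k S i \<and>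
                          card (cnbhd V E v - pd_step V E k S i) \<le> k})"

definition pd_closure :: "'a set \<Rightarrow> 'a set set \<Rightarrow> nat \<Rightarrow> 'a set \<Rightarrow> 'a set" where
  "pd_closure V E k S = (\<Union>i. pd_step V E k S i)"

definition k_power_dominating :: "'a set \<Rightarrow> 'a set set \<Rightarrow> nat \<Rightarrow> 'a set \<Rightarrow> bool" where
  "k_power_dominating V E k S \<longleftrightarrow> S \<subseteq> V \<and> pd_closure V E k S = V"

definition k_power_domination_number :: "'a set \<Rightarrow> 'a set set \<Rightarrow> nat \<Rightarrow> nat" where
  "k_power_domination_number V E k =
     (LEAST n. \<exists>S. k_power_dominating V E k S \<and> card S = n)"

text \<open>The rook's graph K_a \<box> K_a on vertex set {0..<a} \<times> {0..<a}.\<close>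
definition rook_vertices :: "nat \<Rightarrow> (nat \<times> nat) set" where
  "rook_vertices a = {0..<a} \<times> {0..<a}"

definition rook_edges :: "nat \<Rightarrow> (nat \<times> nat) set set" where
  "rook_edges a = {{x, y} | x y. x \<in> rook_vertices a \<and> y \<in> rook_vertices a \<and> x \<noteq> y \<and>
                     (fst x = fst y \<or> snd x = snd y)}"

end

theory Submission
  imports Defs
begin

(* Lower bound: if |S| + k + 2 \<le> a, the vertices sharing a row or a column with S form a set T
   containing N[S] that forcing never leaves: a vertex of T with a neighbour outside T lies on a
   line with at least k + 2 vertices outside T, and deleting e hides at most one of them.
   Upper bound: for e joining (r, c1) and (r, c2), take a matching S of a - k - 1 vertices whose
   rows avoid r and whose columns contain c1 but not c2.  Then (r, c1) forces row r except
   (r, c2), a vertex in a row of S forces each remaining column except c2, and finally every row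
   forces its vertex in column c2.  Edges inside a column reduce to this case by transposition. *)

lemma cnbhd_subset_insert: "cnbhd V E v \<subseteq> insert v V"
  unfolding cnbhd_def by auto

lemma finite_cnbhd: "finite V \<Longrightarrow> finite (cnbhd V E v)"
  using cnbhd_subset_insert by (rule finite_subset) simp

lemma cnbhd_self: "v \<in> cnbhd V E v"
  unfolding cnbhd_def by simp

lemma cnbhd_delete_edge: "cnbhd V (E - {e}) v = {u \<in> cnbhd V E v. u = v \<or> {u, v} \<noteq> e}"
  unfolding cnbhd_def by auto

lemma doubleton_partner_unique: "\<exists>z. \<forall>u. {u, v} = e \<longrightarrow> u = z"
  by (metis doubleton_eq_iff)

lemma pd_step_subset: "S \<subseteq> V \<Longrightarrow> pd_step V E k S i \<subseteq> V"
  by (induction i) (use cnbhd_subset_insert[of V E] in \<open>fastforce simp: cnbhd_set_def\<close>)+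

lemma pd_step_SucI:
  assumes "v \<in> pd_step V E k S i" "card (cnbhd V E v - pd_step V E k S i) \<le> k"
  shows "cnbhd V E v \<subseteq> pd_step V E k S (Suc i)"
  using assms by auto

lemma pd_step_mono: "i \<le> j \<Longrightarrow> pd_step V E k S i \<subseteq> pd_step V E k S j"
proof (rule lift_Suc_mono_le[of "pd_step V E k S"])
  fix i
  show "pd_step V E k S i \<subseteq> pd_step V E k S (Suc i)"
  proof
    fix w assume "w \<in> pd_step V E k S i"
    then obtain v where v: "w \<in> cnbhd V E v" "cnbhd V E v \<subseteq> pd_step V E k S i"
      by (cases i) (auto simp: cnbhd_set_def)
    then have "card (cnbhd V E v - pd_step V E k S i) = 0"
      by (metis Diff_eq_empty_iff card.empty)
    then have "cnbhd V E v \<subseteq> pd_step V E k S (Suc i)"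
      using v(2) cnbhd_self[of v V E] by (intro pd_step_SucI) auto
    with v(1) show "w \<in> pd_step V E k S (Suc i)" by blast
  qed
qed

lemma pd_closure_subset: "S \<subseteq> V \<Longrightarrow> pd_closure V E k S \<subseteq> V"
  unfolding pd_closure_def using pd_step_subset by blast

lemma cnbhd_set_subset_pd_closure: "cnbhd_set V E S \<subseteq> pd_closure V E k S"
  unfolding pd_closure_def by (metis UN_upper UNIV_I pd_step.simps(1))

lemma finite_subset_pd_step:
  assumes "finite X" "X \<subseteq> pd_closure V E k S"
  obtains i where "X \<subseteq> pd_step V E k S i"
  using assms
proof (induction X arbitrary: thesis rule: finite_induct)
  case empty
  then show ?case by blast
next
  case (insert x X)
  obtain i where "X \<subseteq> pd_step V E k S i" using insert by blast
  moreover obtain j where "x \<in> pd_step V E k S j" using insert.prems(2) by (auto simp: pd_closure_def)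
  ultimately have "insert x X \<subseteq> pd_step V E k S (max i j)"
    using pd_step_mono[of i "max i j"] pd_step_mono[of j "max i j"] by fastforce
  then show ?case by (rule insert.prems(1))
qed

lemma pd_closure_force:
  assumes "finite V" "X \<subseteq> V" "X \<subseteq> pd_closure V E k S" "v \<in> X" "card (cnbhd V E v - X) \<le> k"
  shows "cnbhd V E v \<subseteq> pd_closure V E k S"
proof -
  have "finite X" using assms(1,2) by (rule rev_finite_subset)
  then obtain i where i: "X \<subseteq> pd_step V E k S i" using assms(3) by (rule finite_subset_pd_step)
  have "card (cnbhd V E v - pd_step V E k S i) \<le> card (cnbhd V E v - X)"
    using i assms(1) by (intro card_mono) (auto simp: finite_cnbhd)
  then have "cnbhd V E v \<subseteq> pd_step V E k S (Suc i)"
    using i assms(4,5) by (intro pd_step_SucI) auto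
  then show ?thesis unfolding pd_closure_def by blast
qed

lemma pd_closure_subset_closed:
  assumes "finite V" "cnbhd_set V E S \<subseteq> T"
    and closed: "\<And>v. v \<in> T \<Longrightarrow> card (cnbhd V E v - T) \<le> k \<Longrightarrow> cnbhd V E v \<subseteq> T"
  shows "pd_closure V E k S \<subseteq> T"
proof -
  have "pd_step V E k S i \<subseteq> T" for i
  proof (induction i)
    case 0
    then show ?case using assms(2) by simp
  next
    case (Suc i)
    have "cnbhd V E v \<subseteq> T"
      if "v \<in> pd_step V E k S i" "card (cnbhd V E v - pd_step V E k S i) \<le> k" for v
    proof (rule closed)
      show "v \<in> T" using that(1) Suc by blast
      have "card (cnbhd V E v - T) \<le> card (cnbhd V E v - pd_step V E k S i)"
        using Suc assms(1) by (intro card_mono) (auto simp: finite_cnbhd)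
      with that(2) show "card (cnbhd V E v - T) \<le> k" by linarith
    qed
    then show ?case by auto
  qed
  then show ?thesis unfolding pd_closure_def by blast
qed

lemma cnbhd_image:
  assumes "inj f"
  shows "cnbhd (f ` V) ((`) f ` E) (f v) = f ` cnbhd V E v"
proof -
  have edge_iff: "{f x, f v} \<in> (`) f ` E \<longleftrightarrow> {x, v} \<in> E" for x
  proof -
    have "f ` A = f ` B \<longleftrightarrow> A = B" for A B using assms by (rule inj_image_eq_iff)
    moreover have "{f x, f v} = f ` {x, v}" by simp
    ultimately show ?thesis unfolding image_iff by metis
  qed
  show ?thesis
  proof (intro set_eqI iffI)
    fix u assume "u \<in> cnbhd (f ` V) ((`) f ` E) (f v)"
    then show "u \<in> f ` cnbhd V E v" unfolding cnbhd_def using edge_iff by blast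
  next
    fix u assume "u \<in> f ` cnbhd V E v"
    then show "u \<in> cnbhd (f ` V) ((`) f ` E) (f v)" unfolding cnbhd_def using edge_iff by blast
  qed
qed

lemma pd_step_image:
  assumes "inj f"
  shows "pd_step (f ` V) ((`) f ` E) k (f ` S) i = f ` pd_step V E k S i"
proof (induction i)
  case 0
  show ?case by (simp add: cnbhd_set_def cnbhd_image[OF assms] image_UN)
next
  case (Suc i)
  let ?P = "pd_step V E k S i" and ?N' = "cnbhd (f ` V) ((`) f ` E)"
  have card_eq: "card (f ` cnbhd V E v - f ` ?P) = card (cnbhd V E v - ?P)" for v
    using assms by (simp add: image_set_diff[symmetric] card_image inj_on_subset[of f UNIV])
  have "{?N' u | u. u \<in> f ` ?P \<and> card (?N' u - f ` ?P) \<le> k}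
      = {?N' (f v) | v. v \<in> ?P \<and> card (?N' (f v) - f ` ?P) \<le> k}"
    by blast
  also have "\<dots> = {f ` cnbhd V E v | v. v \<in> ?P \<and> card (cnbhd V E v - ?P) \<le> k}"
    by (simp only: cnbhd_image[OF assms] card_eq)
  also have "\<dots> = (`) f ` {cnbhd V E v | v. v \<in> ?P \<and> card (cnbhd V E v - ?P) \<le> k}"
    by blast
  finally show ?case by (simp only: pd_step.simps Suc image_Union)
qed

lemma k_power_dominating_image:
  assumes "inj f" "k_power_dominating V E k S"
  shows "k_power_dominating (f ` V) ((`) f ` E) k (f ` S)"
proof -
  have "pd_closure (f ` V) ((`) f ` E) k (f ` S) = f ` pd_closure V E k S"
    unfolding pd_closure_def pd_step_image[OF assms(1)] image_UN ..
  with assms(2) show ?thesis unfolding k_power_dominating_def by (simp add: image_mono)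
qed

lemma mem_rook_vertices: "p \<in> rook_vertices a \<longleftrightarrow> fst p < a \<and> snd p < a"
  unfolding rook_vertices_def by (cases p) auto

lemma finite_rook_vertices: "finite (rook_vertices a)"
  unfolding rook_vertices_def by simp

lemma doubleton_in_rook_edges_iff:
  "{u, v} \<in> rook_edges a \<longleftrightarrow>
     u \<in> rook_vertices a \<and> v \<in> rook_vertices a \<and> u \<noteq> v \<and> (fst u = fst v \<or> snd u = snd v)"
proof
  assume "{u, v} \<in> rook_edges a"
  then obtain x y where "{u, v} = {x, y}" "x \<in> rook_vertices a" "y \<in> rook_vertices a" "x \<noteq> y"
    "fst x = fst y \<or> snd x = snd y"
    unfolding rook_edges_def by blast
  then show "u \<in> rook_vertices a \<and> v \<in> rook_vertices a \<and> u \<noteq> v \<and> (fst u = fst v \<or> snd u = snd v)"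
    by (auto simp: doubleton_eq_iff)
qed (unfold rook_edges_def, blast)

lemma rook_cnbhd_delete_edge:
  assumes "v \<in> rook_vertices a"
  shows "cnbhd (rook_vertices a) (rook_edges a - {e}) v =
           {u \<in> rook_vertices a. (fst u = fst v \<or> snd u = snd v) \<and> (u = v \<or> {u, v} \<noteq> e)}"
proof (rule set_eqI)
  fix u
  show "u \<in> cnbhd (rook_vertices a) (rook_edges a - {e}) v \<longleftrightarrow>
    u \<in> {u \<in> rook_vertices a. (fst u = fst v \<or> snd u = snd v) \<and> (u = v \<or> {u, v} \<noteq> e)}"
    using assms doubleton_in_rook_edges_iff[of u v a] unfolding cnbhd_delete_edge cnbhd_def by auto
qed

lemma swap_rook_vertices: "prod.swap ` rook_vertices a = rook_vertices a"
  unfolding rook_vertices_def by (simp add: product_swap)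

lemma swap_rook_edges: "(`) prod.swap ` rook_edges a = rook_edges a"
proof -
  have swap_sub: "(`) prod.swap ` rook_edges a \<subseteq> rook_edges a" for a
  proof
    fix F assume "F \<in> (`) prod.swap ` rook_edges a"
    then obtain x y where F: "F = {prod.swap x, prod.swap y}" and xy: "{x, y} \<in> rook_edges a"
      unfolding rook_edges_def by blast
    have "prod.swap x \<noteq> prod.swap y"
      using xy unfolding doubleton_in_rook_edges_iff by (metis swap_swap)
    with xy have "{prod.swap x, prod.swap y} \<in> rook_edges a"
      unfolding doubleton_in_rook_edges_iff by (auto simp: mem_rook_vertices)
    then show "F \<in> rook_edges a" unfolding F .
  qed
  have "rook_edges a = (`) prod.swap ` (`) prod.swap ` rook_edges a"
    by (simp add: image_image)
  also have "\<dots> \<subseteq> (`) prod.swap ` rook_edges a"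
    by (intro image_mono swap_sub)
  finally show ?thesis using swap_sub by (rule subset_antisym[rotated])
qed

lemma card_atLeastLessThan_diff_image:
  "finite S \<Longrightarrow> a - card S \<le> card ({0..<a} - f ` S)"
  using diff_card_le_card_Diff[of "f ` S" "{0..<a}"] card_image_le[of S f] by simp

lemma rook_delete_edge_card_cnbhd_diff:
  assumes v: "v \<in> rook_vertices a" "v \<in> X"
    and L: "L \<subseteq> {u \<in> rook_vertices a. fst u = fst v \<or> snd u = snd v} - X" "k + 2 \<le> card L"
  shows "k < card (cnbhd (rook_vertices a) (rook_edges a - {e}) v - X)"
proof -
  obtain z where z: "\<forall>u. {u, v} = e \<longrightarrow> u = z" using doubleton_partner_unique by blast
  have "L - {z} \<subseteq> cnbhd (rook_vertices a) (rook_edges a - {e}) v - X"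
    using L(1) v z by (auto simp: rook_cnbhd_delete_edge)
  then have "card (L - {z}) \<le> card (cnbhd (rook_vertices a) (rook_edges a - {e}) v - X)"
    by (rule card_mono[OF finite_Diff[OF finite_cnbhd[OF finite_rook_vertices]]])
  moreover have "card L - 1 \<le> card (L - {z})" using diff_card_le_card_Diff[of "{z}" L] by simp
  ultimately show ?thesis using L(2) by linarith
qed

lemma pd_closure_rook_delete_edge_ne:
  assumes S: "S \<subseteq> rook_vertices a" and small: "card S + k + 2 \<le> a"
  shows "pd_closure (rook_vertices a) (rook_edges a - {e}) k S \<noteq> rook_vertices a"
proof -
  let ?V = "rook_vertices a" and ?N = "cnbhd (rook_vertices a) (rook_edges a - {e})"
  define T where "T = {p \<in> ?V. fst p \<in> fst ` S \<or> snd p \<in> snd ` S}"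
  have "finite S" using S finite_rook_vertices by (rule finite_subset)
  have free_rows: "k + 2 \<le> card ({0..<a} - fst ` S)"
    using small card_atLeastLessThan_diff_image[OF \<open>finite S\<close>, of a fst] by linarith
  have free_cols: "k + 2 \<le> card ({0..<a} - snd ` S)"
    using small card_atLeastLessThan_diff_image[OF \<open>finite S\<close>, of a snd] by linarith
  have "pd_closure ?V (rook_edges a - {e}) k S \<subseteq> T"
  proof (rule pd_closure_subset_closed[OF finite_rook_vertices])
    show "cnbhd_set ?V (rook_edges a - {e}) S \<subseteq> T"
      using S unfolding cnbhd_set_def T_def by (force simp: rook_cnbhd_delete_edge)
  next
    fix v assume vT: "v \<in> T" and few: "card (?N v - T) \<le> k"
    have vV: "v \<in> ?V" using vT unfolding T_def by blast
    show "?N v \<subseteq> T"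
    proof (rule ccontr)
      assume "\<not> ?N v \<subseteq> T"
      then obtain w where w: "w \<in> ?N v" "w \<notin> T" by blast
      obtain L where "L \<subseteq> {u \<in> ?V. fst u = fst v \<or> snd u = snd v} - T" "k + 2 \<le> card L"
      proof (cases "fst w = fst v")
        case True
        with w vV have "fst v \<notin> fst ` S" unfolding T_def by (auto simp: rook_cnbhd_delete_edge)
        then show thesis
          using vV free_cols
          by (intro that[of "(\<lambda>j. (fst v, j)) ` ({0..<a} - snd ` S)"])
             (force simp: T_def mem_rook_vertices card_image inj_on_def)+
      next
        case False
        with w vV have "snd w = snd v" "snd v \<notin> snd ` S"
          unfolding T_def by (auto simp: rook_cnbhd_delete_edge)
        then show thesis
          using vV free_rows
          by (intro that[of "(\<lambda>i. (i, snd v)) ` ({0..<a} - fst ` S)"])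
             (force simp: T_def mem_rook_vertices card_image inj_on_def)+
      qed
      with vV vT have "k < card (?N v - T)" by (rule rook_delete_edge_card_cnbhd_diff)
      with few show False by linarith
    qed
  qed
  moreover have "{0..<a} - fst ` S \<noteq> {}" "{0..<a} - snd ` S \<noteq> {}"
    using free_rows free_cols by (metis card.empty le_zero_eq add_is_0 zero_neq_numeral)+
  then obtain i j where "i \<in> {0..<a} - fst ` S" "j \<in> {0..<a} - snd ` S" by blast
  then have "(i, j) \<in> ?V - T" unfolding T_def by (auto simp: mem_rook_vertices image_iff)
  ultimately show ?thesis by blast
qed

lemma rook_row_edge_pd_closure_last_column:
  assumes k: "1 \<le> k" and "c2 < a" and j0: "j0 < a" "j0 \<noteq> c1" "j0 \<noteq> c2"
    and cols: "{p \<in> rook_vertices a. snd p \<noteq> c2}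
                 \<subseteq> pd_closure (rook_vertices a) (rook_edges a - {{(r, c1), (r, c2)}}) k S"
  shows "rook_vertices a \<subseteq> pd_closure (rook_vertices a) (rook_edges a - {{(r, c1), (r, c2)}}) k S"
proof -
  let ?V = "rook_vertices a" and ?X = "{p \<in> rook_vertices a. snd p \<noteq> c2}"
  let ?N = "cnbhd ?V (rook_edges a - {{(r, c1), (r, c2)}})"
  have "(i, c2) \<in> pd_closure ?V (rook_edges a - {{(r, c1), (r, c2)}}) k S" if "i < a" for i
  proof -
    have ij0: "(i, j0) \<in> ?V" using that j0(1) by (simp add: mem_rook_vertices)
    have "?N (i, j0) - ?X \<subseteq> {(i, c2)}"
      using j0 by (auto simp: rook_cnbhd_delete_edge[OF ij0])
    then have "card (?N (i, j0) - ?X) \<le> k"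
      using k card_mono[of "{(i, c2)}" "?N (i, j0) - ?X"] by simp
    then have "?N (i, j0) \<subseteq> pd_closure ?V (rook_edges a - {{(r, c1), (r, c2)}}) k S"
      using ij0 j0(3) by (intro pd_closure_force[OF finite_rook_vertices _ cols]) auto
    moreover have "(i, c2) \<in> ?N (i, j0)"
      using that \<open>c2 < a\<close> j0 by (auto simp: rook_cnbhd_delete_edge[OF ij0] mem_rook_vertices doubleton_eq_iff)
    ultimately show ?thesis by blast
  qed
  with cols show ?thesis by (force simp: mem_rook_vertices)
qed

lemma rook_row_edge_pd_closure:
  assumes k: "1 \<le> k" and a: "k + 2 \<le> a" and rc: "r < a" "c1 < a" "c2 < a" "c1 \<noteq> c2"
    and R: "R \<subseteq> {0..<a} - {r}" "card R + k + 1 = a"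
    and C: "C \<subseteq> {0..<a} - {c2}" "c1 \<in> C" "card C + k + 1 = a"
    and cross: "{p \<in> rook_vertices a. fst p \<in> R \<or> snd p \<in> C}
                  \<subseteq> pd_closure (rook_vertices a) (rook_edges a - {{(r, c1), (r, c2)}}) k S"
  shows "rook_vertices a \<subseteq> pd_closure (rook_vertices a) (rook_edges a - {{(r, c1), (r, c2)}}) k S"
proof -
  let ?V = "rook_vertices a" and ?e = "{(r, c1), (r, c2)}"
  let ?N = "cnbhd ?V (rook_edges a - {?e})" and ?P = "pd_closure ?V (rook_edges a - {?e}) k S"
  have forces: "?N v \<subseteq> ?P" if "X \<subseteq> ?V" "X \<subseteq> ?P" "v \<in> X" "?N v - X \<subseteq> f ` B" "card B \<le> k" "finite B"
    for X v and f :: "nat \<Rightarrow> nat \<times> nat" and B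
    using pd_closure_force[OF finite_rook_vertices that(1-3)] surj_card_le[OF that(6,4)] that(5)
    by (meson le_trans)
  have "finite R" "finite C" "r \<notin> R" "c2 \<notin> C" using R(1) C(1) by (auto intro: finite_subset)
  have free_rows: "card ({0..<a} - insert r R) = k"
    using R rc \<open>finite R\<close> \<open>r \<notin> R\<close> by (subst card_Diff_subset) auto
  have free_cols: "card ({0..<a} - insert c2 C) = k"
    using C rc \<open>finite C\<close> \<open>c2 \<notin> C\<close> by (subst card_Diff_subset) auto
  have "?N (r, c1) \<subseteq> ?P"
  proof (rule forces)
    show "?N (r, c1) - {p \<in> ?V. fst p \<in> R \<or> snd p \<in> C} \<subseteq> (\<lambda>j. (r, j)) ` ({0..<a} - insert c2 C)"
      using rc C(2) by (auto simp: rook_cnbhd_delete_edge mem_rook_vertices)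
  qed (use rc C cross free_cols in \<open>auto simp: mem_rook_vertices\<close>)
  then have row: "{p \<in> ?V. fst p = r \<and> snd p \<noteq> c2} \<subseteq> ?P"
    using rc by (force simp: rook_cnbhd_delete_edge mem_rook_vertices doubleton_eq_iff)
  define X where "X = {p \<in> ?V. fst p \<in> R \<or> snd p \<in> C \<or> (fst p = r \<and> snd p \<noteq> c2)}"
  obtain i0 where i0: "i0 \<in> R" using R a by fastforce
  have "?N (i0, j) \<subseteq> ?P" if "j < a" "j \<noteq> c2" for j
  proof (rule forces)
    have "(i0, j) \<in> ?V" using that i0 R(1) by (auto simp: mem_rook_vertices)
    then show "?N (i0, j) - X \<subseteq> (\<lambda>i. (i, j)) ` ({0..<a} - insert r R)"
      using that i0 R(1) by (auto simp: X_def rook_cnbhd_delete_edge mem_rook_vertices)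
  qed (use that i0 R(1) row cross free_rows in \<open>auto simp: X_def mem_rook_vertices\<close>)
  then have cols: "{p \<in> ?V. snd p \<noteq> c2} \<subseteq> ?P"
    using i0 R by (force simp: rook_cnbhd_delete_edge mem_rook_vertices doubleton_eq_iff)
  have "\<exists>j0::nat. j0 < 3 \<and> j0 \<noteq> c1 \<and> j0 \<noteq> c2" by presburger
  then obtain j0 where "j0 < 3" "j0 \<noteq> c1" "j0 \<noteq> c2" by blast
  moreover have "j0 < a" using \<open>j0 < 3\<close> a k by linarith
  ultimately show ?thesis using rook_row_edge_pd_closure_last_column[OF k rc(3) _ _ _ cols] by blast
qed

lemma rook_row_edge_dominating_set:
  assumes k: "1 \<le> k" and a: "k + 2 \<le> a" and rc: "r < a" "c1 < a" "c2 < a" "c1 \<noteq> c2"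
  shows "\<exists>S. k_power_dominating (rook_vertices a) (rook_edges a - {{(r, c1), (r, c2)}}) k S
             \<and> card S = a - k - 1"
proof -
  let ?V = "rook_vertices a" and ?E = "rook_edges a - {{(r, c1), (r, c2)}}"
  have "a - k - 1 \<le> card ({0..<a} - {r})" using rc by simp
  then obtain R where R: "R \<subseteq> {0..<a} - {r}" "card R = a - k - 1"
    by (rule obtain_subset_with_card_n)
  have "a - k - 2 \<le> card ({0..<a} - {c1, c2})" using rc by (simp add: card_Diff_subset)
  then obtain C' where C': "C' \<subseteq> {0..<a} - {c1, c2}" "card C' = a - k - 2"
    by (rule obtain_subset_with_card_n)
  define C where "C = insert c1 C'"
  have "finite C'" "c1 \<notin> C'" using C'(1) by (auto intro: finite_subset)
  then have C: "C \<subseteq> {0..<a} - {c2}" "c1 \<in> C" "card C = a - k - 1"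
    using C' rc a by (auto simp: C_def)
  have "finite R" "finite C" using R(1) C(1) by (auto intro: finite_subset)
  then obtain g where g: "bij_betw g R C"
    using R(2) C(3) finite_same_card_bij by metis
  define S where "S = (\<lambda>i. (i, g i)) ` R"
  have SV: "S \<subseteq> ?V"
    using R(1) C(1) bij_betw_apply[OF g] by (fastforce simp: S_def mem_rook_vertices)
  have "card S = a - k - 1"
    unfolding S_def using R(2) by (subst card_image) (auto simp: inj_on_def)
  moreover have "{p \<in> ?V. fst p \<in> R \<or> snd p \<in> C} \<subseteq> cnbhd_set ?V ?E S"
  proof (intro subsetI, elim CollectE conjE disjE)
    fix p assume p: "p \<in> ?V" "fst p \<in> R"
    have s: "(fst p, g (fst p)) \<in> S" using p(2) by (simp add: S_def)
    moreover have "p \<in> cnbhd ?V ?E (fst p, g (fst p))"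
      using p R(1) by (auto simp: rook_cnbhd_delete_edge[OF subsetD[OF SV s]])
    ultimately show "p \<in> cnbhd_set ?V ?E S" unfolding cnbhd_set_def by blast
  next
    fix p assume p: "p \<in> ?V" "snd p \<in> C"
    then obtain i where i: "i \<in> R" "g i = snd p"
      using g by (auto simp: bij_betw_def)
    then have s: "(i, snd p) \<in> S" by (force simp: S_def)
    moreover have "p \<in> cnbhd ?V ?E (i, snd p)"
      using p i R(1) by (auto simp: rook_cnbhd_delete_edge[OF subsetD[OF SV s]])
    ultimately show "p \<in> cnbhd_set ?V ?E S" unfolding cnbhd_set_def by blast
  qed
  then have "?V \<subseteq> pd_closure ?V ?E k S"
    using rook_row_edge_pd_closure[OF k a rc R(1) _ C(1,2), of S] R(2) C(3) a
      cnbhd_set_subset_pd_closure[of ?V ?E S k] by fastforce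
  with SV pd_closure_subset[OF SV, of ?E k] have "k_power_dominating ?V ?E k S"
    unfolding k_power_dominating_def by blast
  ultimately show ?thesis by blast
qed

lemma rook_delete_edge_swap:
  "(`) prod.swap ` (rook_edges a - {e}) = rook_edges a - {prod.swap ` e}"
proof -
  have "inj ((`) (prod.swap :: nat \<times> nat \<Rightarrow> nat \<times> nat))"
    by (rule injI) (simp add: inj_image_eq_iff)
  then show ?thesis by (simp add: image_set_diff swap_rook_edges)
qed

lemma rook_delete_edge_dominating_set:
  assumes k: "1 \<le> k" and a: "k + 2 \<le> a" and e: "e \<in> rook_edges a"
  shows "\<exists>S. k_power_dominating (rook_vertices a) (rook_edges a - {e}) k S \<and> card S = a - k - 1"
proof -
  obtain x y where xy: "e = {x, y}" "x \<in> rook_vertices a" "y \<in> rook_vertices a" "x \<noteq> y"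
    "fst x = fst y \<or> snd x = snd y"
    using e unfolding rook_edges_def by blast
  show ?thesis
  proof (cases "fst x = fst y")
    case True
    then have "e = {(fst x, snd x), (fst x, snd y)}" "snd x \<noteq> snd y"
      using xy(1,4) by (auto simp: prod_eq_iff)
    then show ?thesis
      using rook_row_edge_dominating_set[OF k a, of "fst x" "snd x" "snd y"] xy(2,3)
      by (simp add: mem_rook_vertices)
  next
    case False
    then have swap_e: "prod.swap ` e = {(snd x, fst x), (snd x, fst y)}"
      using xy(1,5) by (cases x, cases y) auto
    obtain S where S: "k_power_dominating (rook_vertices a) (rook_edges a - {prod.swap ` e}) k S"
      "card S = a - k - 1"
      using rook_row_edge_dominating_set[OF k a, of "snd x" "fst x" "fst y"] xy(2,3) False
      unfolding swap_e by (auto simp: mem_rook_vertices)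
    have "k_power_dominating (rook_vertices a) (rook_edges a - {e}) k (prod.swap ` S)"
      using k_power_dominating_image[OF _ S(1), of prod.swap]
      by (simp add: rook_delete_edge_swap swap_rook_vertices image_image)
    moreover have "card (prod.swap ` S) = a - k - 1" using S(2) by (simp add: card_image)
    ultimately show ?thesis by blast
  qed
qed

theorem mainTheorem7:
  fixes k a :: nat and e :: "(nat \<times> nat) set"
  assumes "k \<ge> 1" and "a \<ge> k + 2" and "e \<in> rook_edges a"
  shows "k_power_domination_number (rook_vertices a) (rook_edges a - {e}) k = a - k - 1"
  unfolding k_power_domination_number_def
proof (rule Least_equality)
  show "\<exists>S. k_power_dominating (rook_vertices a) (rook_edges a - {e}) k S \<and> card S = a - k - 1"
    using assms by (rule rook_delete_edge_dominating_set)
next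
  fix n assume "\<exists>S. k_power_dominating (rook_vertices a) (rook_edges a - {e}) k S \<and> card S = n"
  then obtain S where S: "k_power_dominating (rook_vertices a) (rook_edges a - {e}) k S" "card S = n"
    by blast
  show "a - k - 1 \<le> n"
  proof (rule ccontr)
    assume too_small: "\<not> a - k - 1 \<le> n"
    have "S \<subseteq> rook_vertices a" using S(1) unfolding k_power_dominating_def by blast
    moreover have "card S + k + 2 \<le> a" using too_small S(2) by linarith
    ultimately have "pd_closure (rook_vertices a) (rook_edges a - {e}) k S \<noteq> rook_vertices a"
      by (rule pd_closure_rook_delete_edge_ne)
    then show False using S(1) unfolding k_power_dominating_def by blast
  qed
qed

end
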